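(* Let $G$ be a compact Lie group, $Q$ a smooth manifold with a smooth $G$-action, and $T\leq G$ a closed abelian subgroup such that $Q$ has only finitely many $T$-isotropy types. For $s,t\in T$ write $s\sim t$ iff $Q^s=Q^t$, with $[t]$ the class of $t$. Suppose $s,t\in T$ satisfy $[s]\cap\overline{[t]}\neq\emptyset$. Then for every connected component $[s]^\circ$ of $[s]$ and every connected component $[t]^\circ$ of $[t]$ with $[s]^\circ\cap\overline{[t]^\circ}\neq\emptyset$, one has $[s]^\circ\subseteq\overline{[t]^\circ}$.
   Context: For $t\in G$, $Q^t=\{q\in Q: tq=q\}$. "Finitely many $T$-isotropy types" means only finitely many distinct isotropy groups $T_q=\{t\in T: tq=q\}$, $q\in Q$, occur. *)

theory Defs
  imports "HOL-Analysis.Analysis"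
begin

text \<open>C-infinity maps between Euclidean spaces on an open set: differentiable, and every
  directional derivative is again C-infinity (coinductively, i.e. derivatives of all orders).\<close>
coinductive smooth_on :: "'a::euclidean_space set \<Rightarrow> ('a \<Rightarrow> 'b::euclidean_space) \<Rightarrow> bool" where
  "open U \<Longrightarrow> f differentiable_on U \<Longrightarrow>
   (\<forall>v. smooth_on U (\<lambda>x. frechet_derivative f (at x) v)) \<Longrightarrow> smooth_on U f"

definition smooth_map_on :: "'a::euclidean_space set \<Rightarrow> ('a \<Rightarrow> 'b::euclidean_space) \<Rightarrow> bool" where
  "smooth_map_on S f \<longleftrightarrow> (\<forall>p\<in>S. \<exists>U g. open U \<and> p \<in> U \<and> smooth_on U g \<and> (\<forall>x\<in>S \<inter> U. f x = g x))"

definition diffeo_on :: "'a::euclidean_space set \<Rightarrow> 'a set \<Rightarrow> ('a \<Rightarrow> 'a) \<Rightarrow> bool" where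
  "diffeo_on U V \<phi> \<longleftrightarrow> open U \<and> open V \<and> smooth_on U \<phi> \<and>
     (\<exists>\<psi>. smooth_on V \<psi> \<and> (\<forall>x\<in>U. \<phi> x \<in> V \<and> \<psi> (\<phi> x) = x) \<and> (\<forall>y\<in>V. \<psi> y \<in> U \<and> \<phi> (\<psi> y) = y))"

text \<open>Embedded smooth submanifold of a Euclidean space (by Whitney, every smooth manifold is
  diffeomorphic to one): locally straightened by a diffeomorphism to a coordinate subspace.\<close>
definition smooth_submanifold :: "'a::euclidean_space set \<Rightarrow> bool" where
  "smooth_submanifold M \<longleftrightarrow> (\<forall>p\<in>M. \<exists>B\<subseteq>(Basis::'a set). \<exists>U V \<phi>. p \<in> U \<and> diffeo_on U V \<phi> \<and>
      \<phi> ` (M \<inter> U) = V \<inter> {x. \<forall>i\<in>Basis - B. x \<bullet> i = 0})"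

text \<open>Compact Lie group, realised as a compact subgroup of GL(n,R) (Peter-Weyl / Cartan).\<close>
definition compact_matrix_group :: "(real^'n^'n) set \<Rightarrow> bool" where
  "compact_matrix_group G \<longleftrightarrow> compact G \<and> mat 1 \<in> G \<and> (\<forall>g\<in>G. invertible g) \<and>
     (\<forall>g\<in>G. \<forall>h\<in>G. g ** h \<in> G) \<and> (\<forall>g\<in>G. matrix_inv g \<in> G)"

definition smooth_action :: "(real^'n^'n) set \<Rightarrow> 'e::euclidean_space set \<Rightarrow> (real^'n^'n \<Rightarrow> 'e \<Rightarrow> 'e) \<Rightarrow> bool" where
  "smooth_action G Q act \<longleftrightarrow> (\<forall>q\<in>Q. act (mat 1) q = q) \<and>
     (\<forall>g\<in>G. \<forall>h\<in>G. \<forall>q\<in>Q. act (g ** h) q = act g (act h q)) \<and>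
     (\<forall>g\<in>G. \<forall>q\<in>Q. act g q \<in> Q) \<and>
     smooth_map_on (G \<times> Q) (\<lambda>(g, q). act g q)"

definition closed_abelian_subgroup :: "(real^'n^'n) set \<Rightarrow> (real^'n^'n) set \<Rightarrow> bool" where
  "closed_abelian_subgroup T G \<longleftrightarrow> T \<subseteq> G \<and> closed T \<and> mat 1 \<in> T \<and>
     (\<forall>s\<in>T. \<forall>t\<in>T. s ** t \<in> T \<and> s ** t = t ** s) \<and> (\<forall>t\<in>T. matrix_inv t \<in> T)"

definition fixset :: "'e set \<Rightarrow> ('g \<Rightarrow> 'e \<Rightarrow> 'e) \<Rightarrow> 'g \<Rightarrow> 'e set" where
  "fixset Q act t = {q\<in>Q. act t q = q}"

definition isotropy :: "'g set \<Rightarrow> ('g \<Rightarrow> 'e \<Rightarrow> 'e) \<Rightarrow> 'e \<Rightarrow> 'g set" where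
  "isotropy T act q = {t\<in>T. act t q = q}"

definition fixclass :: "'g set \<Rightarrow> 'e set \<Rightarrow> ('g \<Rightarrow> 'e \<Rightarrow> 'e) \<Rightarrow> 'g \<Rightarrow> 'g set" where
  "fixclass T Q act t = {s\<in>T. fixset Q act s = fixset Q act t}"

end

theory Submission
  imports Defs
begin

text \<open>Let \<open>z\<close> be a point of \<open>[s]\<^sup>\<circ> \<inter> closure [t]\<^sup>\<circ>\<close>. The \<open>u \<in> T\<close> with \<open>Q\<^sup>z \<subseteq> Q\<^sup>u\<close> form a
  closed abelian matrix group \<open>K\<close>, which is locally connected because near \<open>1\<close> it is covered
  by exponentials of its Lie algebra. Finitely many isotropy types make fixed point sets upper
  semicontinuous: \<open>Q\<^sup>v \<subseteq> Q\<^sup>z\<close> for \<open>v \<in> T\<close> near \<open>z\<close>. So for \<open>y' \<in> [t]\<^sup>\<circ>\<close> close to \<open>z\<close>, right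
  translation by \<open>z\<inverse>y'\<close> carries a small connected neighbourhood of \<open>z\<close> in \<open>K\<close> into \<open>[t]\<close>, hence
  into \<open>[t]\<^sup>\<circ>\<close>, and every point of \<open>[s]\<^sup>\<circ>\<close> near \<open>z\<close> lies in \<open>closure [t]\<^sup>\<circ>\<close>. Thus
  \<open>[s]\<^sup>\<circ> \<inter> closure [t]\<^sup>\<circ>\<close> is open and closed in the connected set \<open>[s]\<^sup>\<circ>\<close>.\<close>

section \<open>The exponential in a Banach algebra\<close>

lemma isCont_exp_banach: "isCont exp (x::'a::{real_normed_algebra_1,banach})"
proof -
  define R where "R = norm x + 1"
  have "uniform_limit (ball 0 R) (\<lambda>n (y::'a). \<Sum>i<n. y ^ i /\<^sub>R fact i) (\<lambda>y. \<Sum>i. y ^ i /\<^sub>R fact i) sequentially"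
  proof (rule Weierstrass_m_test)
    fix n and y :: 'a assume "y \<in> ball 0 R"
    then have "norm y ^ n \<le> R ^ n" by (intro power_mono) auto
    then show "norm (y ^ n /\<^sub>R fact n) \<le> R ^ n /\<^sub>R fact n"
      using norm_power_ineq[of y n] by (simp add: divide_right_mono)
  qed (rule summable_exp_generic)
  then have "continuous_on (ball 0 R) (\<lambda>y::'a. \<Sum>i. y ^ i /\<^sub>R fact i)"
    by (rule uniform_limit_theorem[rotated]) (simp, intro always_eventually allI continuous_intros)
  then show ?thesis
    unfolding exp_def[abs_def] by (rule continuous_on_interior) (simp add: R_def)
qed

lemma continuous_on_exp_banach: "continuous_on S (exp :: 'a::{real_normed_algebra_1,banach} \<Rightarrow> 'a)"
  by (simp add: continuous_at_imp_continuous_on isCont_exp_banach)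

lemma norm_exp_minus_one_minus_le:
  fixes h :: "'a::{real_normed_algebra_1,banach}"
  assumes "norm h \<le> 1"
  shows "norm (exp h - 1 - h) \<le> norm h ^ 2"
proof -
  let ?f = "\<lambda>n. h ^ (n + 2) /\<^sub>R fact (n + 2)"
  let ?g = "\<lambda>n. norm h ^ (n + 2) /\<^sub>R fact (n + 2)"
  have g: "summable ?g"
    using summable_ignore_initial_segment[OF summable_exp_generic[of "norm h"], of 2] .
  have le: "norm (?f n) \<le> ?g n" for n
    using norm_power_ineq[of h "n + 2"] by (simp add: divide_right_mono)
  have f: "summable (\<lambda>n. norm (?f n))"
    by (rule summable_comparison_test'[OF g]) (use le in simp)
  have "norm (exp h - 1 - h) = norm (suminf ?f)"
    using exp_first_two_terms[of h] by (simp add: divide_inverse_commute)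
  also have "\<dots> \<le> suminf ?g"
    using summable_norm[OF f] suminf_le[OF le f g] by linarith
  also have "suminf ?g = exp (norm h) - 1 - norm h"
    using exp_first_two_terms[of "norm h"] by (simp add: divide_inverse_commute)
  also have "\<dots> \<le> norm h ^ 2"
    using exp_bound[of "norm h"] assms by simp
  finally show ?thesis .
qed

lemma exp_has_derivative_at_0:
  "(exp has_derivative (\<lambda>h. h)) (at (0::'a::{real_normed_algebra_1,banach}))"
  unfolding has_derivative_at
proof (intro conjI bounded_linear_ident)
  have "\<forall>\<^sub>F h in at (0::'a). norm h < 1"
    using eventually_at_ball'[of 1 "0::'a" UNIV] by (auto elim!: eventually_mono)
  then have "\<forall>\<^sub>F h in at (0::'a). norm (norm (exp (0 + h) - exp 0 - h) / norm h) \<le> norm h"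
  proof eventually_elim
    case (elim h)
    then have "norm (exp h - 1 - h) \<le> norm h * norm h"
      using norm_exp_minus_one_minus_le[of h] by (simp add: power2_eq_square)
    then show ?case using elim by (simp add: divide_le_eq)
  qed
  moreover have "((\<lambda>h. norm h) \<longlongrightarrow> 0) (at (0::'a))"
    using tendsto_norm_zero[OF tendsto_ident_at[of "0::'a" UNIV]] by simp
  ultimately show "((\<lambda>h. norm (exp (0 + h) - exp 0 - h) / norm h) \<longlongrightarrow> 0) (at (0::'a))"
    by (rule Lim_null_comparison)
qed

lemma tendsto_exp_scaleR_quotient:
  fixes X :: "'a::{real_normed_algebra_1,banach}"
  shows "((\<lambda>t::real. (exp (t *\<^sub>R X) - 1) /\<^sub>R t) \<longlongrightarrow> X) (at 0)"
proof -
  have "((\<lambda>t::real. t *\<^sub>R X) has_derivative (\<lambda>t. t *\<^sub>R X)) (at 0)"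
    by (intro derivative_eq_intros) auto
  from has_derivative_compose[OF this, of exp "\<lambda>h. h"]
  have "((\<lambda>t::real. exp (t *\<^sub>R X)) has_derivative (\<lambda>t. t *\<^sub>R X)) (at 0)"
    using exp_has_derivative_at_0 by simp
  then have "((\<lambda>t::real. norm (exp (t *\<^sub>R X) - 1 - t *\<^sub>R X) / norm t) \<longlongrightarrow> 0) (at 0)"
    by (simp add: has_derivative_at)
  moreover have "\<forall>\<^sub>F t in at (0::real).
      norm (exp (t *\<^sub>R X) - 1 - t *\<^sub>R X) / norm t = norm ((exp (t *\<^sub>R X) - 1) /\<^sub>R t - X)"
    unfolding eventually_at_filter
  proof (intro always_eventually allI impI)
    fix t :: real assume "t \<noteq> 0"
    then have "(exp (t *\<^sub>R X) - 1) /\<^sub>R t - X = (exp (t *\<^sub>R X) - 1 - t *\<^sub>R X) /\<^sub>R t"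
      by (simp add: algebra_simps)
    then show "norm (exp (t *\<^sub>R X) - 1 - t *\<^sub>R X) / norm t = norm ((exp (t *\<^sub>R X) - 1) /\<^sub>R t - X)"
      by (simp add: divide_inverse mult.commute)
  qed
  ultimately have "((\<lambda>t::real. norm ((exp (t *\<^sub>R X) - 1) /\<^sub>R t - X)) \<longlongrightarrow> 0) (at 0)"
    by (rule Lim_transform_eventually)
  then have "((\<lambda>t::real. (exp (t *\<^sub>R X) - 1) /\<^sub>R t - X) \<longlongrightarrow> 0) (at 0)"
    by (rule tendsto_norm_zero_cancel)
  then show ?thesis by (rule LIM_zero_cancel)
qed

lemma commute_if_exp_scaleR_commute:
  fixes X Y :: "'a::{real_normed_algebra_1,banach}"
  assumes "\<And>t::real. exp (t *\<^sub>R X) * exp (t *\<^sub>R Y) = exp (t *\<^sub>R Y) * exp (t *\<^sub>R X)"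
  shows "X * Y = Y * X"
proof -
  let ?a = "\<lambda>t::real. (exp (t *\<^sub>R X) - 1) /\<^sub>R t"
  let ?b = "\<lambda>t::real. (exp (t *\<^sub>R Y) - 1) /\<^sub>R t"
  have commute: "?a t * ?b t = ?b t * ?a t" for t
  proof -
    have "(exp (t *\<^sub>R X) - 1) * (exp (t *\<^sub>R Y) - 1) = (exp (t *\<^sub>R Y) - 1) * (exp (t *\<^sub>R X) - 1)"
      using assms[of t] by (simp add: algebra_simps)
    then show ?thesis by (simp only: mult_scaleR_left mult_scaleR_right)
  qed
  have "((\<lambda>t. ?b t * ?a t) \<longlongrightarrow> Y * X) (at 0)"
    by (intro tendsto_mult tendsto_exp_scaleR_quotient)
  then have "((\<lambda>t. ?a t * ?b t) \<longlongrightarrow> Y * X) (at 0)"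
    by (simp only: commute)
  moreover have "((\<lambda>t. ?a t * ?b t) \<longlongrightarrow> X * Y) (at 0)"
    by (intro tendsto_mult tendsto_exp_scaleR_quotient)
  ultimately show ?thesis
    using tendsto_unique[OF at_neq_bot] by blast
qed

section \<open>Square matrices as a Banach algebra\<close>

lemma matrix_add_rdistrib: "(B + C) ** A = B ** A + C ** (A::real^'n::finite^'n)"
  by (simp add: matrix_matrix_mult_def vec_eq_iff distrib_right sum.distrib)

text \<open>The Euclidean norm on \<open>real^'n^'n\<close> is not an algebra norm (\<open>norm (mat 1) \<noteq> 1\<close>), so
  the exponential is transported from a copy of the matrices carrying the operator norm.\<close>

typedef (overloaded) 'n sq_matrix = "UNIV :: (real^'n::finite^'n) set"
  morphisms Rep_sq_matrix Abs_sq_matrix by auto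

setup_lifting type_definition_sq_matrix

instantiation sq_matrix :: (finite) real_normed_algebra_1
begin

lift_definition norm_sq_matrix :: "'a sq_matrix \<Rightarrow> real" is "\<lambda>A. onorm ((*v) A)" .
lift_definition minus_sq_matrix :: "'a sq_matrix \<Rightarrow> 'a sq_matrix \<Rightarrow> 'a sq_matrix" is "(-)" .
lift_definition plus_sq_matrix :: "'a sq_matrix \<Rightarrow> 'a sq_matrix \<Rightarrow> 'a sq_matrix" is "(+)" .
lift_definition uminus_sq_matrix :: "'a sq_matrix \<Rightarrow> 'a sq_matrix" is "uminus" .
lift_definition zero_sq_matrix :: "'a sq_matrix" is "0" .
lift_definition one_sq_matrix :: "'a sq_matrix" is "mat 1" .
lift_definition times_sq_matrix :: "'a sq_matrix \<Rightarrow> 'a sq_matrix \<Rightarrow> 'a sq_matrix" is "(**)" .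
lift_definition scaleR_sq_matrix :: "real \<Rightarrow> 'a sq_matrix \<Rightarrow> 'a sq_matrix" is "scaleR" .

definition dist_sq_matrix :: "'a sq_matrix \<Rightarrow> 'a sq_matrix \<Rightarrow> real"
  where "dist_sq_matrix a b = norm (a - b)"

definition uniformity_sq_matrix_def:
  "(uniformity :: ('a sq_matrix \<times> 'a sq_matrix) filter) = (INF e\<in>{0 <..}. principal {(x, y). dist x y < e})"

definition open_sq_matrix :: "'a sq_matrix set \<Rightarrow> bool"
  where "open_sq_matrix S = (\<forall>x\<in>S. \<forall>\<^sub>F (x', y) in uniformity. x' = x \<longrightarrow> y \<in> S)"

definition sgn_sq_matrix :: "'a sq_matrix \<Rightarrow> 'a sq_matrix"
  where "sgn_sq_matrix x = scaleR (inverse (norm x)) x"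

instance
proof
  fix a b c :: "'a sq_matrix" and r s :: real
  have bl: "bounded_linear ((*v) A)" for A :: "real^'a^'a" by simp
  show "a * b * c = a * (b * c)" by transfer (simp add: matrix_mul_assoc)
  show "(a + b) * c = a * c + b * c"
    by transfer (rule matrix_add_rdistrib)
  show "a * (b + c) = a * b + a * c" by transfer (simp add: matrix_add_ldistrib)
  show "1 * a = a" by transfer simp
  show "a * 1 = a" by transfer simp
  show "(0::'a sq_matrix) \<noteq> 1" by transfer (simp add: vec_eq_iff mat_def)
  show "a + b + c = a + (b + c)" by transfer simp
  show "a + b = b + a" by transfer simp
  show "0 + a = a" by transfer simp
  show "- a + a = 0" by transfer simp
  show "a - b = a + - b" by transfer simp
  show "r *\<^sub>R (a + b) = r *\<^sub>R a + r *\<^sub>R b" by transfer (simp add: scaleR_add_right)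
  show "(r + s) *\<^sub>R a = r *\<^sub>R a + s *\<^sub>R a" by transfer (simp add: scaleR_add_left)
  show "r *\<^sub>R s *\<^sub>R a = (r * s) *\<^sub>R a" by transfer simp
  show "1 *\<^sub>R a = a" by transfer simp
  show "r *\<^sub>R a * b = r *\<^sub>R (a * b)" by transfer (simp add: scalar_matrix_assoc)
  show "a * r *\<^sub>R b = r *\<^sub>R (a * b)" by transfer (simp add: matrix_scalar_ac scalar_matrix_assoc)
  show "dist a b = norm (a - b)" by (simp add: dist_sq_matrix_def)
  show "sgn a = inverse (norm a) *\<^sub>R a" by (simp add: sgn_sq_matrix_def)
  show "(uniformity :: ('a sq_matrix \<times> 'a sq_matrix) filter) = (INF e\<in>{0 <..}. principal {(x, y). dist x y < e})"
    by (simp add: uniformity_sq_matrix_def)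
  show "\<And>U :: 'a sq_matrix set. open U = (\<forall>x\<in>U. \<forall>\<^sub>F (x', y) in uniformity. x' = x \<longrightarrow> y \<in> U)"
    by (simp add: open_sq_matrix_def)
  show "norm (1::'a sq_matrix) = 1"
  proof transfer
    have "(*v) (mat 1::real^'a^'a) = (\<lambda>x. x)" by (rule ext) simp
    then show "onorm ((*v) (mat 1::real^'a^'a)) = 1" using onorm_id by simp
  qed
  show "norm (a * b) \<le> norm a * norm b"
    by transfer (use onorm_compose[OF bl bl] in \<open>simp add: o_def matrix_vector_mul_assoc mult.commute\<close>)
  show "(norm a = 0) = (a = 0)"
  proof transfer
    fix a :: "real^'a^'a"
    show "(onorm ((*v) a) = 0) = (a = 0)"
      by (simp add: onorm_eq_0) (metis matrix_vector_mult_0 matrix_eq)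
  qed
  show "norm (a + b) \<le> norm a + norm b"
  proof transfer
    fix a b :: "real^'a^'a"
    have "(*v) (a + b) = (\<lambda>x. a *v x + b *v x)" by (rule ext) (simp add: matrix_vector_mult_add_rdistrib)
    then show "onorm ((*v) (a + b)) \<le> onorm ((*v) a) + onorm ((*v) b)"
      using onorm_triangle[OF bl bl, of a b] by simp
  qed
  show "norm (r *\<^sub>R a) = \<bar>r\<bar> * norm a"
    by transfer (simp add: onorm_scaleR[OF bl, symmetric] scaleR_matrix_vector_assoc)
qed

end

lemma norm_le_onorm_matrix:
  fixes A :: "real^'n::finite^'n"
  shows "norm A \<le> real (CARD('n))^2 * onorm ((*v) A)"
proof -
  have "norm A \<le> (\<Sum>i\<in>UNIV. norm (A $ i))" by (simp add: norm_vec_def L2_set_le_sum)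
  also have "\<dots> \<le> (\<Sum>i\<in>(UNIV::'n set). \<Sum>j\<in>(UNIV::'n set). onorm ((*v) A))"
  proof (rule sum_mono)
    fix i
    have "norm (A $ i) \<le> (\<Sum>j\<in>UNIV. \<bar>A $ i $ j\<bar>)" using norm_le_l1_cart[of "A $ i"] by simp
    also have "\<dots> \<le> (\<Sum>j\<in>(UNIV::'n set). onorm ((*v) A))"
      by (intro sum_mono matrix_component_le_onorm)
    finally show "norm (A $ i) \<le> (\<Sum>j\<in>(UNIV::'n set). onorm ((*v) A))" .
  qed
  also have "\<dots> = real (CARD('n))^2 * onorm ((*v) A)" by (simp add: power2_eq_square)
  finally show ?thesis .
qed

lemma onorm_le_norm_matrix:
  fixes A :: "real^'n::finite^'n"
  shows "onorm ((*v) A) \<le> real (CARD('n))^2 * norm A"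
proof -
  have "onorm ((*v) A) \<le> (\<Sum>i\<in>UNIV. \<Sum>j\<in>UNIV. \<bar>A $ i $ j\<bar>)" by (rule onorm_le_matrix_component_sum)
  also have "\<dots> \<le> (\<Sum>i\<in>(UNIV::'n set). \<Sum>j\<in>(UNIV::'n set). norm A)"
    by (rule sum_mono)+ (rule order.trans[OF component_le_norm_cart Finite_Cartesian_Product.norm_nth_le])
  also have "\<dots> = real (CARD('n))^2 * norm A" by (simp add: power2_eq_square)
  finally show ?thesis .
qed

lemma bounded_linear_Rep_sq_matrix: "bounded_linear Rep_sq_matrix"
proof (rule bounded_linear_intro[where K="real (CARD('n))^2"])
  fix x y :: "'n::finite sq_matrix" and r :: real
  show "Rep_sq_matrix (x + y) = Rep_sq_matrix x + Rep_sq_matrix y" by transfer simp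
  show "Rep_sq_matrix (r *\<^sub>R x) = r *\<^sub>R Rep_sq_matrix x" by transfer simp
  show "norm (Rep_sq_matrix x) \<le> norm x * real (CARD('n))^2"
    using norm_le_onorm_matrix[of "Rep_sq_matrix x"] by (simp add: norm_sq_matrix.rep_eq mult.commute)
qed

lemma bounded_linear_Abs_sq_matrix: "bounded_linear (Abs_sq_matrix :: real^'n::finite^'n \<Rightarrow> 'n sq_matrix)"
proof (rule bounded_linear_intro[where K="real (CARD('n))^2"])
  fix x y :: "real^'n^'n" and r :: real
  show "Abs_sq_matrix (x + y) = (Abs_sq_matrix x + Abs_sq_matrix y :: 'n sq_matrix)"
    by (simp add: plus_sq_matrix.abs_eq)
  show "Abs_sq_matrix (r *\<^sub>R x) = (r *\<^sub>R Abs_sq_matrix x :: 'n sq_matrix)"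
    by (simp add: scaleR_sq_matrix.abs_eq)
  show "norm (Abs_sq_matrix x :: 'n sq_matrix) \<le> norm x * real (CARD('n))^2"
    using onorm_le_norm_matrix[of x] by (simp add: norm_sq_matrix.abs_eq mult.commute)
qed

instance sq_matrix :: (finite) banach
proof
  fix X :: "nat \<Rightarrow> 'a sq_matrix"
  assume "Cauchy X"
  then have "Cauchy (\<lambda>n. Rep_sq_matrix (X n))"
    by (rule bounded_linear.Cauchy[OF bounded_linear_Rep_sq_matrix])
  then obtain L where "(\<lambda>n. Rep_sq_matrix (X n)) \<longlonglongrightarrow> L"
    using convergent_eq_Cauchy by blast
  then have "(\<lambda>n. Abs_sq_matrix (Rep_sq_matrix (X n)) :: 'a sq_matrix) \<longlonglongrightarrow> Abs_sq_matrix L"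
    by (rule bounded_linear.tendsto[OF bounded_linear_Abs_sq_matrix])
  then show "convergent X" by (auto simp: Rep_sq_matrix_inverse convergent_def)
qed

section \<open>The matrix exponential\<close>

lemma bounded_bilinear_matrix_mult:
  "bounded_bilinear ((**) :: real^'n::finite^'n \<Rightarrow> real^'n^'n \<Rightarrow> real^'n^'n)"
proof -
  have "linear (\<lambda>B. A ** B)" "linear (\<lambda>B. B ** A)" for A :: "real^'n^'n"
    by (auto intro!: linearI simp: matrix_add_ldistrib matrix_add_rdistrib matrix_scalar_ac
        scalar_matrix_assoc)
  then show ?thesis
    unfolding bilinear_conv_bounded_bilinear[symmetric] bilinear_def by blast
qed

lemma continuous_on_matrix_mult [continuous_intros]:
  fixes f g :: "'a::topological_space \<Rightarrow> real^'n::finite^'n"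
  shows "continuous_on S f \<Longrightarrow> continuous_on S g \<Longrightarrow> continuous_on S (\<lambda>x. f x ** g x)"
  by (rule bounded_bilinear.continuous_on[OF bounded_bilinear_matrix_mult])

lemma isCont_matrix_mult_left: "isCont (\<lambda>X. A ** X) (B::real^'n::finite^'n)"
  for A :: "real^'n^'n"
  by (rule linear_continuous_at[OF bounded_bilinear.bounded_linear_right[OF bounded_bilinear_matrix_mult]])

lemma matrix_inv_right: "invertible A \<Longrightarrow> A ** matrix_inv A = mat 1"
  and matrix_inv_left: "invertible A \<Longrightarrow> matrix_inv A ** A = mat 1"
  for A :: "'a::semiring_1^'n^'n"
  unfolding invertible_def matrix_inv_def by (metis (mono_tags, lifting) someI)+

lemma matrix_inv_unique_left:
  fixes A B :: "'a::semiring_1^'n^'n"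
  assumes "invertible A" "B ** A = mat 1"
  shows "B = matrix_inv A"
  by (metis assms matrix_inv_right matrix_mul_assoc matrix_mul_lid matrix_mul_rid)

definition matrix_exp :: "real^'n::finite^'n \<Rightarrow> real^'n^'n" where
  "matrix_exp X = Rep_sq_matrix (exp (Abs_sq_matrix X))"

lemma matrix_exp_0 [simp]: "matrix_exp 0 = mat 1"
  by (simp add: matrix_exp_def zero_sq_matrix.abs_eq[symmetric] one_sq_matrix.rep_eq)

lemma matrix_exp_add:
  assumes "X ** Y = Y ** X"
  shows "matrix_exp (X + Y) = matrix_exp X ** matrix_exp Y"
proof -
  have "Abs_sq_matrix X * Abs_sq_matrix Y = Abs_sq_matrix Y * Abs_sq_matrix X"
    using assms by (simp add: times_sq_matrix.abs_eq)
  then show ?thesis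
    by (simp add: matrix_exp_def plus_sq_matrix.abs_eq[symmetric] exp_add_commuting
        times_sq_matrix.rep_eq)
qed

lemma matrix_exp_scaleR_add: "matrix_exp ((s + t) *\<^sub>R X) = matrix_exp (s *\<^sub>R X) ** matrix_exp (t *\<^sub>R X)"
  by (simp add: scaleR_add_left matrix_exp_add matrix_scalar_ac scalar_matrix_assoc[symmetric])

lemma matrix_exp_minus_left: "matrix_exp (- X) ** matrix_exp X = mat 1"
  using matrix_exp_scaleR_add[of "-1" 1 X] by simp

lemma continuous_on_matrix_exp: "continuous_on S matrix_exp"
  unfolding matrix_exp_def
  by (intro continuous_on_compose2[OF linear_continuous_on[OF bounded_linear_Rep_sq_matrix] _ subset_UNIV]
      continuous_on_compose2[OF continuous_on_exp_banach _ subset_UNIV]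
      linear_continuous_on[OF bounded_linear_Abs_sq_matrix])

lemma isCont_matrix_exp: "isCont matrix_exp X"
  by (simp add: continuous_on_interior[OF continuous_on_matrix_exp[of UNIV]])

lemma matrix_exp_has_derivative_at_0:
  "(matrix_exp has_derivative (\<lambda>H. H)) (at (0::real^'n::finite^'n))"
proof -
  have "(exp has_derivative (\<lambda>h. h)) (at (Abs_sq_matrix (0::real^'n^'n)))"
    using exp_has_derivative_at_0 by (simp add: zero_sq_matrix.abs_eq[symmetric])
  from has_derivative_compose[OF bounded_linear.has_derivative[OF bounded_linear_Abs_sq_matrix
        has_derivative_ident] this]
  have "((\<lambda>X. exp (Abs_sq_matrix X)) has_derivative Abs_sq_matrix) (at (0::real^'n^'n))"
    by simp
  from bounded_linear.has_derivative[OF bounded_linear_Rep_sq_matrix this]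
  show ?thesis
    by (simp add: matrix_exp_def[abs_def] Abs_sq_matrix_inverse)
qed

lemma commute_if_matrix_exp_scaleR_commute:
  assumes "\<And>t::real. matrix_exp (t *\<^sub>R X) ** matrix_exp (t *\<^sub>R Y) = matrix_exp (t *\<^sub>R Y) ** matrix_exp (t *\<^sub>R X)"
  shows "X ** Y = Y ** X"
proof -
  have "exp (t *\<^sub>R Abs_sq_matrix X) * exp (t *\<^sub>R Abs_sq_matrix Y) =
      exp (t *\<^sub>R Abs_sq_matrix Y) * exp (t *\<^sub>R Abs_sq_matrix X)" for t
    using assms[of t]
    by (simp add: matrix_exp_def scaleR_sq_matrix.abs_eq[symmetric] times_sq_matrix.rep_eq[symmetric]
        Rep_sq_matrix_inject)
  then have "Abs_sq_matrix X * Abs_sq_matrix Y = Abs_sq_matrix Y * Abs_sq_matrix X"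
    by (rule commute_if_exp_scaleR_commute)
  then show ?thesis by (simp add: times_sq_matrix.abs_eq Abs_sq_matrix_inject)
qed

text \<open>The map \<open>Z \<mapsto> exp (P Z) exp (Z - P Z)\<close> has derivative the identity at \<open>0\<close>, so by
  the open mapping theorem its image of any ball around \<open>0\<close> contains a ball around \<open>1\<close>.\<close>

lemma matrix_exp_split_covers_ball:
  fixes P :: "real^'n::finite^'n \<Rightarrow> real^'n^'n"
  assumes P: "bounded_linear P" and "\<delta> > 0"
  shows "\<exists>r>0. ball (mat 1) r \<subseteq> (\<lambda>Z. matrix_exp (P Z) ** matrix_exp (Z - P Z)) ` ball 0 \<delta>"
proof -
  define \<Psi> where "\<Psi> Z = matrix_exp (P Z) ** matrix_exp (Z - P Z)" for Z
  have P0: "P 0 = 0" using P by (rule linear_simps(3))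
  have "(matrix_exp has_derivative (\<lambda>H. H)) (at (P 0))" "(matrix_exp has_derivative (\<lambda>H. H)) (at (0 - P 0))"
    by (simp_all add: P0 matrix_exp_has_derivative_at_0)
  from has_derivative_compose[OF bounded_linear_imp_has_derivative[OF P] this(1)]
    has_derivative_compose[OF has_derivative_diff[OF has_derivative_ident
        bounded_linear_imp_has_derivative[OF P]] this(2)]
  have "((\<lambda>Z. matrix_exp (P Z)) has_derivative P) (at 0)"
    "((\<lambda>Z. matrix_exp (Z - P Z)) has_derivative (\<lambda>H. H - P H)) (at 0)"
    by simp_all
  from bounded_bilinear.FDERIV[OF bounded_bilinear_matrix_mult this]
  have "(\<Psi> has_derivative (\<lambda>H. H)) (at 0)"
    by (simp add: \<Psi>_def[abs_def] P0)
  moreover have "continuous_on UNIV \<Psi>"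
    unfolding \<Psi>_def[abs_def]
    by (intro continuous_on_matrix_mult continuous_on_compose2[OF continuous_on_matrix_exp]
        linear_continuous_on P continuous_on_diff continuous_on_id) auto
  ultimately have "\<Psi> 0 \<in> interior (\<Psi> ` ball 0 \<delta>)"
    using \<open>\<delta> > 0\<close> by (intro sussmann_open_mapping[of UNIV _ _ "\<lambda>H. H" "\<lambda>H. H"]) auto
  moreover have "\<Psi> 0 = mat 1" by (simp add: \<Psi>_def P0)
  ultimately show ?thesis by (auto simp: mem_interior \<Psi>_def)
qed

section \<open>Closed abelian matrix groups are locally connected\<close>

locale closed_abelian_matrix_group =
  fixes K :: "(real^'n::finite^'n) set"
  assumes closed: "closed K"
    and one_mem: "mat 1 \<in> K"
    and mult_mem: "a \<in> K \<Longrightarrow> b \<in> K \<Longrightarrow> a ** b \<in> K"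
    and inv_mem: "a \<in> K \<Longrightarrow> matrix_inv a \<in> K"
    and invertible: "a \<in> K \<Longrightarrow> invertible a"
    and commute: "a \<in> K \<Longrightarrow> b \<in> K \<Longrightarrow> a ** b = b ** a"
begin

definition lie_algebra :: "(real^'n^'n) set" where
  "lie_algebra = {X. \<forall>t::real. matrix_exp (t *\<^sub>R X) \<in> K}"

lemma matrix_exp_scaleR_mem: "X \<in> lie_algebra \<Longrightarrow> matrix_exp (t *\<^sub>R X) \<in> K"
  by (simp add: lie_algebra_def)

lemma matrix_exp_mem: "X \<in> lie_algebra \<Longrightarrow> matrix_exp X \<in> K"
  using matrix_exp_scaleR_mem[of X 1] by simp

lemma subspace_lie_algebra: "subspace lie_algebra"
  unfolding subspace_def
proof (intro conjI ballI allI)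
  show "0 \<in> lie_algebra" by (simp add: lie_algebra_def one_mem)
next
  fix c :: real and X assume "X \<in> lie_algebra"
  then show "c *\<^sub>R X \<in> lie_algebra"
    unfolding lie_algebra_def using matrix_exp_scaleR_mem[of X "_ * c"] by simp
next
  fix X Y assume X: "X \<in> lie_algebra" and Y: "Y \<in> lie_algebra"
  have "X ** Y = Y ** X"
    by (rule commute_if_matrix_exp_scaleR_commute) (intro commute matrix_exp_scaleR_mem X Y)
  then have "matrix_exp (t *\<^sub>R (X + Y)) = matrix_exp (t *\<^sub>R X) ** matrix_exp (t *\<^sub>R Y)" for t :: real
    unfolding scaleR_add_right
    by (intro matrix_exp_add) (simp add: matrix_scalar_ac scalar_matrix_assoc[symmetric])
  then show "X + Y \<in> lie_algebra"
    unfolding lie_algebra_def by (simp add: mult_mem matrix_exp_scaleR_mem X Y)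
qed

lemma matrix_exp_of_int_scaleR_mem:
  assumes "matrix_exp Y \<in> K"
  shows "matrix_exp (of_int m *\<^sub>R Y) \<in> K"
proof -
  have nat: "matrix_exp (of_nat n *\<^sub>R Y) \<in> K" for n
  proof (induction n)
    case (Suc n)
    then show ?case
      using matrix_exp_scaleR_add[of "of_nat n" 1 Y] by (simp add: add.commute mult_mem assms)
  qed (simp add: one_mem)
  have "matrix_exp (- (of_nat n *\<^sub>R Y)) = matrix_inv (matrix_exp (of_nat n *\<^sub>R Y))" for n
    by (rule matrix_inv_unique_left[OF invertible[OF nat] matrix_exp_minus_left])
  then have "matrix_exp (- of_nat n *\<^sub>R Y) \<in> K" for n
    using inv_mem[OF nat] by simp
  with nat show ?thesis
    by (cases m rule: int_cases2) simp_all
qed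

text \<open>Directions along which \<open>K\<close> contains exponentials of arbitrarily small multiples
  belong to the Lie algebra: \<open>exp (t L)\<close> is a limit of integer powers of \<open>exp (Y k)\<close>.\<close>

lemma limit_direction_mem_lie_algebra:
  assumes K: "\<And>k. matrix_exp (Y k) \<in> K" and nonzero: "\<And>k. Y k \<noteq> 0"
    and "Y \<longlonglongrightarrow> 0" and L: "(\<lambda>k. Y k /\<^sub>R norm (Y k)) \<longlonglongrightarrow> L"
  shows "L \<in> lie_algebra"
  unfolding lie_algebra_def
proof (intro CollectI allI)
  fix t :: real
  define \<nu> where "\<nu> k = norm (Y k)" for k
  define n where "n k = \<lfloor>t / \<nu> k\<rfloor>" for k
  have \<nu>_pos: "\<nu> k > 0" for k using nonzero by (simp add: \<nu>_def)
  have \<nu>_0: "\<nu> \<longlonglongrightarrow> 0"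
    using tendsto_norm_zero[OF \<open>Y \<longlonglongrightarrow> 0\<close>] by (simp add: \<nu>_def[abs_def])
  have approx: "\<bar>t - of_int (n k) * \<nu> k\<bar> \<le> \<nu> k" for k
  proof -
    have "of_int (n k) \<le> t / \<nu> k" "t / \<nu> k < of_int (n k) + 1"
      unfolding n_def by linarith+
    moreover have "of_int (n k) * \<nu> k \<le> t" "t < (of_int (n k) + 1) * \<nu> k"
      using calculation \<nu>_pos[of k] by (simp_all add: le_divide_eq divide_less_eq)
    ultimately show ?thesis by (simp add: algebra_simps)
  qed
  have "(\<lambda>k. t - of_int (n k) * \<nu> k) \<longlonglongrightarrow> 0"
    by (rule Lim_null_comparison[OF _ \<nu>_0]) (simp add: approx)
  from tendsto_diff[OF tendsto_const[of t] this]
  have "(\<lambda>k. of_int (n k) * \<nu> k) \<longlonglongrightarrow> t" by simp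
  from tendsto_scaleR[OF this L]
  have "(\<lambda>k. (of_int (n k) * \<nu> k) *\<^sub>R (Y k /\<^sub>R norm (Y k))) \<longlonglongrightarrow> t *\<^sub>R L" .
  moreover have "(of_int (n k) * \<nu> k) *\<^sub>R (Y k /\<^sub>R norm (Y k)) = of_int (n k) *\<^sub>R Y k" for k
    using \<nu>_pos[of k] by (simp add: \<nu>_def)
  ultimately have "(\<lambda>k. of_int (n k) *\<^sub>R Y k) \<longlonglongrightarrow> t *\<^sub>R L"
    by (simp only:)
  from isCont_tendsto_compose[OF isCont_matrix_exp this]
  show "matrix_exp (t *\<^sub>R L) \<in> K"
    by (rule closed_sequentially[OF closed matrix_exp_of_int_scaleR_mem[OF K]])
qed

lemma small_complement_exp_mem_imp_zero:
  assumes P: "linear P" and P_id: "\<And>X. X \<in> lie_algebra \<Longrightarrow> P X = X"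
  shows "\<exists>\<epsilon>>0. \<forall>Y. P Y = 0 \<longrightarrow> norm Y < \<epsilon> \<longrightarrow> matrix_exp Y \<in> K \<longrightarrow> Y = 0"
proof (rule ccontr)
  assume "\<not> ?thesis"
  then have "\<forall>\<epsilon>>0. \<exists>Y. P Y = 0 \<and> norm Y < \<epsilon> \<and> matrix_exp Y \<in> K \<and> Y \<noteq> 0"
    by blast
  then have "\<forall>k::nat. \<exists>Y. P Y = 0 \<and> norm Y < inverse (Suc k) \<and> matrix_exp Y \<in> K \<and> Y \<noteq> 0"
    by simp
  then obtain Y where Y: "\<And>k. P (Y k) = 0" "\<And>k. norm (Y k) < inverse (Suc k)"
    "\<And>k. matrix_exp (Y k) \<in> K" "\<And>k. Y k \<noteq> 0"
    by metis
  have "\<forall>k. Y k /\<^sub>R norm (Y k) \<in> sphere 0 1"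
    using Y(4) by simp
  then obtain L r where L: "L \<in> sphere 0 1" "strict_mono r"
    "((\<lambda>k. Y k /\<^sub>R norm (Y k)) \<circ> r) \<longlonglongrightarrow> L"
    by (rule seq_compactE[OF compact_imp_seq_compact[OF compact_sphere]])
  have "Y \<longlonglongrightarrow> 0"
    using Y(2) by (intro Lim_null_comparison[OF _ LIMSEQ_inverse_real_of_nat] always_eventually allI)
      (simp add: less_imp_le)
  from LIMSEQ_subseq_LIMSEQ[OF this L(2)] have "(\<lambda>k. Y (r k)) \<longlonglongrightarrow> 0"
    by (simp add: o_def)
  then have "L \<in> lie_algebra"
    using L(3) Y(3,4) by (intro limit_direction_mem_lie_algebra[of "\<lambda>k. Y (r k)"]) (simp_all add: o_def)
  moreover have "P L = 0"
  proof -
    have "(\<lambda>k. P (Y (r k) /\<^sub>R norm (Y (r k)))) \<longlonglongrightarrow> P L"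
      using bounded_linear.tendsto[OF linear_conv_bounded_linear[THEN iffD1, OF P] L(3)]
      by (simp add: o_def)
    then show ?thesis
      by (simp add: linear_scale[OF P] Y(1) LIMSEQ_const_iff)
  qed
  ultimately show False
    using P_id L(1) by simp
qed

lemma matrix_exp_covers_neighbourhood:
  assumes "\<epsilon> > 0"
  shows "\<exists>r>0. \<forall>k\<in>K. dist k (mat 1) < r \<longrightarrow> (\<exists>X\<in>lie_algebra. norm X < \<epsilon> \<and> matrix_exp X = k)"
proof -
  obtain P where P: "linear P" "\<And>X. P X \<in> lie_algebra" "\<And>X. X \<in> lie_algebra \<Longrightarrow> P X = X"
    using linear_exists_left_inverse_on[OF linear_id subspace_lie_algebra inj_on_id]
    by (auto simp: id_def)
  have bl: "bounded_linear P" using P(1) by (simp add: linear_conv_bounded_linear)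
  obtain \<epsilon>' where \<epsilon>': "\<epsilon>' > 0" "\<And>Y. P Y = 0 \<Longrightarrow> norm Y < \<epsilon>' \<Longrightarrow> matrix_exp Y \<in> K \<Longrightarrow> Y = 0"
    using small_complement_exp_mem_imp_zero[OF P(1) P(3)] by blast
  obtain C where C: "C > 0" "\<And>X. norm (P X) \<le> norm X * C"
    using bounded_linear.pos_bounded[OF bl] by blast
  define \<delta> where "\<delta> = min \<epsilon> \<epsilon>' / (1 + C)"
  have "\<delta> > 0" using assms \<epsilon>' C by (simp add: \<delta>_def)
  have small: "norm (P Z) < \<epsilon>" "norm (Z - P Z) < \<epsilon>'" if "norm Z < \<delta>" for Z
  proof -
    have "norm Z + norm Z * C < min \<epsilon> \<epsilon>'"
      using that C(1) by (simp add: \<delta>_def less_divide_eq algebra_simps)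
    then show "norm (P Z) < \<epsilon>" "norm (Z - P Z) < \<epsilon>'"
      using C(2)[of Z] norm_ge_zero[of Z] norm_triangle_ineq4[of Z "P Z"] by linarith+
  qed
  obtain r where "r > 0" and r: "ball (mat 1) r \<subseteq> (\<lambda>Z. matrix_exp (P Z) ** matrix_exp (Z - P Z)) ` ball 0 \<delta>"
    using matrix_exp_split_covers_ball[OF bl \<open>\<delta> > 0\<close>] by blast
  have "\<exists>X\<in>lie_algebra. norm X < \<epsilon> \<and> matrix_exp X = k" if k: "k \<in> K" "dist k (mat 1) < r" for k
  proof -
    obtain Z where Z: "norm Z < \<delta>" and k_eq: "k = matrix_exp (P Z) ** matrix_exp (Z - P Z)"
      using k(2) r by (force simp: dist_commute)
    have "- P Z \<in> lie_algebra"
      by (rule subspace_neg[OF subspace_lie_algebra P(2)])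
    then have "matrix_exp (- P Z) ** k \<in> K"
      using mult_mem[OF matrix_exp_mem k(1)] by blast
    moreover have "matrix_exp (- P Z) ** k = matrix_exp (Z - P Z)"
      by (simp add: k_eq matrix_mul_assoc matrix_exp_minus_left)
    moreover have "P (Z - P Z) = 0"
      by (simp add: linear_diff[OF P(1)] P(3)[OF P(2)])
    ultimately have "Z - P Z = 0"
      using \<epsilon>'(2)[OF _ small(2)[OF Z]] by simp
    then have "matrix_exp (P Z) = k"
      by (simp add: k_eq)
    then show ?thesis
      using P(2) small(1)[OF Z] by blast
  qed
  with \<open>r > 0\<close> show ?thesis by blast
qed

text \<open>Local connectedness: a point \<open>w\<close> of \<open>K\<close> near \<open>z\<close> is joined to \<open>z\<close> inside \<open>K\<close> by the
  short one-parameter arc \<open>\<tau> \<mapsto> z exp (\<tau> X)\<close> with \<open>exp X = z\<inverse> w\<close>.\<close>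

lemma connected_component_ball:
  assumes "z \<in> K" "\<epsilon> > 0"
  shows "\<exists>r>0. K \<inter> ball z r \<subseteq> connected_component_set (K \<inter> ball z \<epsilon>) z"
proof -
  define z' where "z' = matrix_inv z"
  have z': "z' \<in> K" "z ** z' = mat 1" "z' ** z = mat 1"
    using inv_mem[OF assms(1)] matrix_inv_right[OF invertible[OF assms(1)]]
      matrix_inv_left[OF invertible[OF assms(1)]] by (simp_all add: z'_def)
  obtain \<epsilon>1 where "\<epsilon>1 > 0" and left_z: "\<And>c. dist c (mat 1) < \<epsilon>1 \<Longrightarrow> dist (z ** c) (z ** mat 1) < \<epsilon>"
    using isCont_matrix_mult_left[where A=z and B="mat 1"] assms(2) unfolding continuous_at_eps_delta by blast
  obtain \<epsilon>2 where "\<epsilon>2 > 0"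
    and exp_near_one: "\<And>X::real^'n^'n. dist X 0 < \<epsilon>2 \<Longrightarrow> dist (matrix_exp X) (matrix_exp 0) < \<epsilon>1"
    using isCont_matrix_exp[of 0] \<open>\<epsilon>1 > 0\<close> unfolding continuous_at_eps_delta by blast
  obtain r1 where "r1 > 0" and r1: "\<And>k. k \<in> K \<Longrightarrow> dist k (mat 1) < r1 \<Longrightarrow>
      \<exists>X\<in>lie_algebra. norm X < \<epsilon>2 \<and> matrix_exp X = k"
    using matrix_exp_covers_neighbourhood[OF \<open>\<epsilon>2 > 0\<close>] by blast
  obtain r where "r > 0" and r: "\<And>w. dist w z < r \<Longrightarrow> dist (z' ** w) (z' ** z) < r1"
    using isCont_matrix_mult_left[where A=z' and B=z] \<open>r1 > 0\<close> unfolding continuous_at_eps_delta by blast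
  have "w \<in> connected_component_set (K \<inter> ball z \<epsilon>) z" if "w \<in> K \<inter> ball z r" for w
  proof -
    from that have w: "w \<in> K" "dist w z < r" by (simp_all add: dist_commute)
    have "dist (z' ** w) (mat 1) < r1"
      using r[OF w(2)] z'(3) by simp
    then obtain X where X: "X \<in> lie_algebra" "norm X < \<epsilon>2" "matrix_exp X = z' ** w"
      using r1[OF mult_mem[OF z'(1) w(1)]] by blast
    define arc where "arc = (\<lambda>\<tau>::real. z ** matrix_exp (\<tau> *\<^sub>R X)) ` {0..1}"
    have "connected arc"
      unfolding arc_def
      by (intro connected_continuous_image connected_Icc continuous_on_matrix_mult
          continuous_on_compose2[OF continuous_on_matrix_exp] continuous_intros) auto
    moreover have "z ** matrix_exp (\<tau> *\<^sub>R X) \<in> K \<inter> ball z \<epsilon>" if "\<tau> \<in> {0..1}" for \<tau>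
    proof
      show "z ** matrix_exp (\<tau> *\<^sub>R X) \<in> K"
        by (rule mult_mem[OF assms(1) matrix_exp_scaleR_mem[OF X(1)]])
      have "norm (\<tau> *\<^sub>R X) \<le> norm X"
        using that by (simp add: mult_left_le_one_le)
      with X(2) have "dist (matrix_exp (\<tau> *\<^sub>R X)) (mat 1) < \<epsilon>1"
        using exp_near_one[of "\<tau> *\<^sub>R X"] by simp
      from left_z[OF this] show "z ** matrix_exp (\<tau> *\<^sub>R X) \<in> ball z \<epsilon>"
        by (simp add: dist_commute)
    qed
    then have "arc \<subseteq> K \<inter> ball z \<epsilon>"
      by (auto simp: arc_def)
    moreover have "z \<in> arc"
      unfolding arc_def by (rule image_eqI[of _ _ 0]) simp_all
    moreover have "w \<in> arc"
      unfolding arc_def by (rule image_eqI[of _ _ 1]) (simp_all add: X(3) matrix_mul_assoc z'(2))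
    ultimately show ?thesis
      by (simp add: connected_componentI)
  qed
  with \<open>r > 0\<close> show ?thesis by (intro exI[of _ r] conjI subsetI)
qed

end

section \<open>Fixed point sets of the action\<close>

lemma smooth_on_imp_continuous_on: "smooth_on U f \<Longrightarrow> continuous_on U f"
  by (auto elim: smooth_on.cases intro: differentiable_imp_continuous_on)

lemma smooth_map_on_imp_continuous_on:
  assumes "smooth_map_on S f"
  shows "continuous_on S f"
proof -
  have "continuous (at p within S) f" if "p \<in> S" for p
  proof -
    obtain U g where U: "open U" "p \<in> U" "smooth_on U g" "\<forall>x\<in>S \<inter> U. f x = g x"
      using assms \<open>p \<in> S\<close> unfolding smooth_map_on_def by blast
    have "continuous (at p within S) g"
      using smooth_on_imp_continuous_on[OF U(3)] U(1,2)
      by (simp add: continuous_on_eq_continuous_at continuous_at_imp_continuous_within)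
    moreover have "openin (top_of_set S) (S \<inter> U)"
      using U(1) by (rule openin_open_Int)
    ultimately show ?thesis
      by (rule continuous_transform_within_openin) (use U \<open>p \<in> S\<close> in auto)
  qed
  then show ?thesis by (simp add: continuous_on_eq_continuous_within)
qed

lemma continuous_on_orbit_map:
  assumes "smooth_action G Q act" "T \<subseteq> G" "q \<in> Q"
  shows "continuous_on T (\<lambda>t. act t q)"
proof -
  have "continuous_on (G \<times> Q) (\<lambda>(g, q). act g q)"
    using assms(1) unfolding smooth_action_def by (blast intro: smooth_map_on_imp_continuous_on)
  then have "continuous_on T ((\<lambda>(g, q). act g q) \<circ> (\<lambda>t. (t, q)))"
    using assms(2,3) by (intro continuous_on_compose continuous_intros) (auto elim: continuous_on_subset)
  then show ?thesis by (simp add: o_def)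
qed

lemma closed_isotropy:
  assumes "smooth_action G Q act" "T \<subseteq> G" "closed T" "q \<in> Q"
  shows "closed (isotropy T act q)"
  unfolding isotropy_def
  using continuous_closed_preimage_constant[OF continuous_on_orbit_map[OF assms(1,2,4)] assms(3)] .

lemma action_matrix_inv_cancel:
  assumes "compact_matrix_group G" "smooth_action G Q act" "g \<in> G" "q \<in> Q"
  shows "act (matrix_inv g) (act g q) = q"
proof -
  have "matrix_inv g \<in> G" "matrix_inv g ** g = mat 1"
    using assms(1,3) matrix_inv_left by (auto simp: compact_matrix_group_def)
  moreover have "act (matrix_inv g ** g) q = act (matrix_inv g) (act g q)"
    using assms(2-4) \<open>matrix_inv g \<in> G\<close> by (simp add: smooth_action_def)
  ultimately show ?thesis
    using assms(2,4) by (simp add: smooth_action_def)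
qed

text \<open>With finitely many isotropy groups, each closed, the isotropy groups not containing \<open>u\<close>
  stay away from \<open>u\<close>; hence the fixed point sets are upper semicontinuous on \<open>T\<close>.\<close>

lemma fixset_subset_near:
  assumes "smooth_action G Q act" "T \<subseteq> G" "closed T" "finite (isotropy T act ` Q)"
  shows "\<exists>e>0. \<forall>v\<in>T. dist v u < e \<longrightarrow> fixset Q act v \<subseteq> fixset Q act u"
proof -
  define far where "far = \<Union>{H \<in> isotropy T act ` Q. u \<notin> H}"
  have "closed far"
    unfolding far_def using assms by (auto intro: closed_isotropy)
  moreover have "u \<notin> far" by (auto simp: far_def)
  ultimately obtain e where "e > 0" "ball u e \<subseteq> - far"
    using open_contains_ball[of "- far"] by (auto simp: open_Compl)
  moreover have "q \<in> fixset Q act u" if "v \<in> T" "v \<in> ball u e" "q \<in> fixset Q act v" for v q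
  proof (rule ccontr)
    assume "q \<notin> fixset Q act u"
    with that(3) have "isotropy T act q \<in> {H \<in> isotropy T act ` Q. u \<notin> H}"
      by (auto simp: fixset_def isotropy_def)
    moreover have "v \<in> isotropy T act q"
      using that by (auto simp: fixset_def isotropy_def)
    ultimately show False
      using that(2) \<open>ball u e \<subseteq> - far\<close> unfolding far_def by blast
  qed
  ultimately show ?thesis
    by (auto simp: dist_commute)
qed

text \<open>A point fixed by \<open>a u\<close> and by \<open>a\<close> is fixed by \<open>u\<close>; by the hypotheses every point of
  either side is fixed by both \<open>c\<close> and \<open>z\<close>.\<close>

lemma fixset_mult_right_eq:
  assumes "compact_matrix_group G" "smooth_action G Q act" "c \<in> G" "z \<in> G" "u \<in> G"
    and "fixset Q act z \<subseteq> fixset Q act c"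
    and "fixset Q act (c ** u) \<subseteq> fixset Q act z" "fixset Q act (z ** u) \<subseteq> fixset Q act z"
  shows "fixset Q act (c ** u) = fixset Q act (z ** u)"
proof -
  have subset: "fixset Q act (a ** u) \<subseteq> fixset Q act (b ** u)"
    if "a \<in> G" "b \<in> G" "fixset Q act (a ** u) \<subseteq> fixset Q act a \<inter> fixset Q act b" for a b
  proof
    fix q assume q: "q \<in> fixset Q act (a ** u)"
    then have "q \<in> Q" "act (a ** u) q = q" "act a q = q" "act b q = q"
      using that(3) by (auto simp: fixset_def)
    moreover have "act u q \<in> Q" "act (a ** u) q = act a (act u q)" "act (b ** u) q = act b (act u q)"
      using assms(2,5) that(1,2) \<open>q \<in> Q\<close> by (auto simp: smooth_action_def)
    ultimately have "act u q = q"
      using action_matrix_inv_cancel[OF assms(1,2) that(1)] by metis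
    with \<open>act (b ** u) q = act b (act u q)\<close> \<open>act b q = q\<close> \<open>q \<in> Q\<close>
    show "q \<in> fixset Q act (b ** u)" by (simp add: fixset_def)
  qed
  show ?thesis
    using assms(3,4,6-8) by (intro equalityI subset) auto
qed

lemma closed_abelian_matrix_group_stabilizer:
  assumes "compact_matrix_group G" "smooth_action G Q act" "closed_abelian_subgroup T G" "P \<subseteq> Q"
  shows "closed_abelian_matrix_group {u \<in> T. P \<subseteq> fixset Q act u}"
proof -
  have T: "T \<subseteq> G" "closed T" "mat 1 \<in> T" "\<And>a b. a \<in> T \<Longrightarrow> b \<in> T \<Longrightarrow> a ** b \<in> T \<and> a ** b = b ** a"
    "\<And>a. a \<in> T \<Longrightarrow> matrix_inv a \<in> T"
    using assms(3) by (auto simp: closed_abelian_subgroup_def)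
  have act: "\<And>q. q \<in> Q \<Longrightarrow> act (mat 1) q = q"
    "\<And>g h q. g \<in> G \<Longrightarrow> h \<in> G \<Longrightarrow> q \<in> Q \<Longrightarrow> act (g ** h) q = act g (act h q)"
    using assms(2) by (auto simp: smooth_action_def)
  have "{u \<in> T. P \<subseteq> fixset Q act u} = T \<inter> (\<Inter>q\<in>P. isotropy T act q)"
    using assms(4) by (auto simp: fixset_def isotropy_def)
  moreover have "closed (T \<inter> (\<Inter>q\<in>P. isotropy T act q))"
    using assms(4) by (intro closed_Int T(2) closed_INT ballI closed_isotropy[OF assms(2) T(1,2)]) auto
  ultimately have "closed {u \<in> T. P \<subseteq> fixset Q act u}"
    by simp
  show ?thesis
  proof
    show "closed {u \<in> T. P \<subseteq> fixset Q act u}" by fact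
    show "mat 1 \<in> {u \<in> T. P \<subseteq> fixset Q act u}"
      using T(3) act(1) assms(4) by (auto simp: fixset_def)
    fix a b assume a: "a \<in> {u \<in> T. P \<subseteq> fixset Q act u}" and b: "b \<in> {u \<in> T. P \<subseteq> fixset Q act u}"
    then show "a ** b = b ** a" using T(4) by blast
    have "act (a ** b) q = q" if "q \<in> P" for q
    proof -
      have "q \<in> Q" "act a q = q" "act b q = q" "a \<in> G" "b \<in> G"
        using a b that T(1) by (auto simp: fixset_def)
      then show ?thesis by (simp add: act(2))
    qed
    then show "a ** b \<in> {u \<in> T. P \<subseteq> fixset Q act u}"
      using a b T(4) assms(4) by (auto simp: fixset_def)
  next
    fix a assume a: "a \<in> {u \<in> T. P \<subseteq> fixset Q act u}"
    then show "invertible a"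
      using assms(1) T(1) by (auto simp: compact_matrix_group_def)
    have "act (matrix_inv a) q = q" if "q \<in> P" for q
    proof -
      have "q \<in> Q" "act a q = q" "a \<in> G"
        using a that T(1) by (auto simp: fixset_def)
      then show ?thesis
        using action_matrix_inv_cancel[OF assms(1,2), of a q] by simp
    qed
    then show "matrix_inv a \<in> {u \<in> T. P \<subseteq> fixset Q act u}"
      using a T(5) assms(4) by (auto simp: fixset_def)
  qed
qed

section \<open>Closures of components of the classes\<close>

lemma connected_subset_closure:
  fixes S U :: "'a::metric_space set"
  assumes "connected S" "S \<inter> closure U \<noteq> {}"
    and near: "\<And>z. z \<in> S \<inter> closure U \<Longrightarrow> \<exists>r>0. \<forall>w\<in>S. dist w z < r \<longrightarrow> w \<in> closure U"
  shows "S \<subseteq> closure U"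
proof -
  have "openin (top_of_set S) (S \<inter> closure U)"
    unfolding openin_euclidean_subtopology_iff using near by blast
  moreover have "closedin (top_of_set S) (S \<inter> closure U)"
    by (rule closedin_closed_Int) simp
  ultimately show ?thesis
    using assms(1,2) unfolding connected_clopen by blast
qed

lemma dist_mult_right_translate_less:
  fixes A z :: "real^'n::finite^'n"
  assumes "\<epsilon> > 0" "A ** z = mat 1"
  shows "\<exists>\<eta>>0. \<forall>y (c::real^'n^'n). dist y z < \<eta> \<longrightarrow> norm c \<le> R \<longrightarrow> dist (c ** (A ** y)) c < \<epsilon>"
proof -
  obtain B where "B > 0" and B: "\<forall>(a::real^'n^'n) (b::real^'n^'n). norm (a ** b) \<le> norm a * norm b * B"
    using bounded_bilinear.pos_bounded[OF bounded_bilinear_matrix_mult] by blast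
  define M where "M = (\<bar>R\<bar> + 1) * ((norm A + 1) * B) * B"
  have "M > 0"
    unfolding M_def using \<open>B > 0\<close> norm_ge_zero[of A] abs_ge_zero[of R] by (intro mult_pos_pos) linarith+
  have "dist (c ** (A ** y)) c < \<epsilon>" if "dist y z < \<epsilon> / M" "norm c \<le> R" for y c :: "real^'n^'n"
  proof -
    have "c ** (A ** y) - c = c ** (A ** (y - z))"
      using assms(2) by (simp add: bounded_bilinear.diff_right[OF bounded_bilinear_matrix_mult])
    then have "dist (c ** (A ** y)) c = norm (c ** (A ** (y - z)))"
      by (simp add: dist_norm)
    also have "\<dots> \<le> norm c * norm (A ** (y - z)) * B"
      using B by blast
    also have "\<dots> \<le> norm c * (norm A * dist y z * B) * B"
      using B[rule_format, of A "y - z"] \<open>B > 0\<close>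
      by (intro mult_right_mono mult_left_mono) (auto simp: dist_norm)
    also have "\<dots> \<le> (\<bar>R\<bar> + 1) * ((norm A + 1) * dist y z * B) * B"
      using that(2) \<open>B > 0\<close> by (intro mult_right_mono mult_mono) auto
    also have "\<dots> = M * dist y z"
      by (simp add: M_def mult_ac)
    also have "\<dots> < \<epsilon>"
      using that(1) \<open>M > 0\<close> by (simp add: less_divide_eq mult.commute)
    finally show ?thesis .
  qed
  moreover have "\<epsilon> / M > 0"
    using \<open>M > 0\<close> assms by simp
  ultimately show ?thesis
    by (intro exI[of _ "\<epsilon> / M"] conjI allI impI)
qed

lemma mult_right_mem_fixclass:
  assumes G: "compact_matrix_group G" and act: "smooth_action G Q act"
    and T: "closed_abelian_subgroup T G"
    and near: "\<And>v. v \<in> T \<Longrightarrow> dist v z < e \<Longrightarrow> fixset Q act v \<subseteq> fixset Q act z"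
    and "z \<in> T" "u \<in> T" "c \<in> T" "fixset Q act z \<subseteq> fixset Q act c"
    and "dist (c ** u) z < e" "dist (z ** u) z < e"
  shows "c ** u \<in> fixclass T Q act (z ** u)"
proof -
  have "T \<subseteq> G" "c ** u \<in> T" "z ** u \<in> T"
    using T assms(5-7) by (auto simp: closed_abelian_subgroup_def)
  then have "fixset Q act (c ** u) = fixset Q act (z ** u)"
    using assms(5-10) by (intro fixset_mult_right_eq[OF G act] near) auto
  with \<open>c ** u \<in> T\<close> show ?thesis
    by (simp add: fixclass_def)
qed

lemma connected_near_stabilizer_subset_closure:
  fixes T :: "(real^'n::finite^'n) set"
  assumes G: "compact_matrix_group G" and act: "smooth_action G Q act"
    and T: "closed_abelian_subgroup T G"
    and near: "\<And>v. v \<in> T \<Longrightarrow> dist v z < e \<Longrightarrow> fixset Q act v \<subseteq> fixset Q act z"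
    and z: "z \<in> T" "z \<in> closure C" and C: "C = connected_component_set (fixclass T Q act t) y"
    and D: "connected D" "z \<in> D"
      "\<And>c. c \<in> D \<Longrightarrow> c \<in> T \<and> fixset Q act z \<subseteq> fixset Q act c \<and> dist c z < e/2"
  shows "D \<subseteq> closure C"
proof
  fix w assume "w \<in> D"
  have "e > 0"
    using D(3)[OF \<open>z \<in> D\<close>] by simp
  have T_props: "T \<subseteq> G" "\<And>a b. a \<in> T \<Longrightarrow> b \<in> T \<Longrightarrow> a ** b \<in> T" "\<And>a. a \<in> T \<Longrightarrow> matrix_inv a \<in> T"
    using T by (auto simp: closed_abelian_subgroup_def)
  define z' where "z' = matrix_inv z"
  have "invertible z"
    using G T_props(1) z(1) by (auto simp: compact_matrix_group_def)
  then have z': "z' \<in> T" "z ** z' = mat 1" "z' ** z = mat 1"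
    using T_props(3) z(1) by (simp_all add: z'_def matrix_inv_right matrix_inv_left)
  show "w \<in> closure C"
    unfolding closure_approachable
  proof (intro allI impI)
    fix \<delta> :: real assume "\<delta> > 0"
    obtain \<eta> where "\<eta> > 0" and \<eta>: "\<forall>y (c::real^'n^'n). dist y z < \<eta> \<longrightarrow> norm c \<le> norm z + e \<longrightarrow>
        dist (c ** (z' ** y)) c < min \<delta> (e/2)"
      using dist_mult_right_translate_less[OF _ z'(3), of "min \<delta> (e/2)" "norm z + e"] \<open>\<delta> > 0\<close> \<open>e > 0\<close>
      by auto
    obtain y' where "y' \<in> C" "dist y' z < min \<eta> e"
      using z(2) \<open>\<eta> > 0\<close> \<open>e > 0\<close> unfolding closure_approachable by (metis min_less_iff_conj)
    define u where "u = z' ** y'"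
    have "y' \<in> fixclass T Q act t"
      using \<open>y' \<in> C\<close> C connected_component_subset by blast
    then have "y' \<in> T" "fixclass T Q act y' = fixclass T Q act t"
      by (simp_all add: fixclass_def)
    have "u \<in> T" "z ** u = y'"
      using T_props(2) z' \<open>y' \<in> T\<close> by (simp_all add: u_def matrix_mul_assoc)
    have close: "dist (c ** u) c < min \<delta> (e/2)" if "c \<in> D" for c
    proof -
      have "dist c z < e/2"
        using D(3)[OF that] by simp
      then have "norm c \<le> norm z + e"
        using norm_triangle_ineq2[of c z] \<open>e > 0\<close> unfolding dist_norm by linarith
      then show ?thesis
        using \<eta> \<open>dist y' z < min \<eta> e\<close> by (simp add: u_def)
    qed
    have "c ** u \<in> fixclass T Q act t" if "c \<in> D" for c
    proof -
      have "dist (c ** u) z < e"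
        using close[OF that] D(3)[OF that] dist_triangle[of "c ** u" z c] by linarith
      then show ?thesis
        using mult_right_mem_fixclass[OF G act T near z(1) \<open>u \<in> T\<close>, where c=c] D(3)[OF that]
          \<open>z ** u = y'\<close> \<open>dist y' z < min \<eta> e\<close> \<open>fixclass T Q act y' = fixclass T Q act t\<close> by simp
    qed
    then have "(\<lambda>c. c ** u) ` D \<subseteq> connected_component_set (fixclass T Q act t) y'"
      using D(1,2) \<open>z ** u = y'\<close>
      by (intro connected_component_maximal connected_continuous_image continuous_on_matrix_mult
          continuous_intros) auto
    also have "\<dots> = C"
      using \<open>y' \<in> C\<close> C by (simp add: connected_component_eq)
    finally have "w ** u \<in> C"
      using \<open>w \<in> D\<close> by blast
    moreover have "dist (w ** u) w < \<delta>"
      using close[OF \<open>w \<in> D\<close>] by simp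
    ultimately show "\<exists>y\<in>C. dist y w < \<delta>" by blast
  qed
qed

lemma near_stabilizer_mem_closure_component:
  fixes T :: "(real^'n::finite^'n) set"
  assumes G: "compact_matrix_group G" and act: "smooth_action G Q act"
    and T: "closed_abelian_subgroup T G" and fin: "finite (isotropy T act ` Q)"
    and z: "z \<in> T" "z \<in> closure C" and C: "C = connected_component_set (fixclass T Q act t) y"
  shows "\<exists>r>0. \<forall>w\<in>T. fixset Q act z \<subseteq> fixset Q act w \<longrightarrow> dist w z < r \<longrightarrow> w \<in> closure C"
proof -
  define K where "K = {u \<in> T. fixset Q act z \<subseteq> fixset Q act u}"
  interpret K: closed_abelian_matrix_group K
    unfolding K_def by (rule closed_abelian_matrix_group_stabilizer[OF G act T]) (auto simp: fixset_def)
  obtain e where "e > 0" and near: "\<And>v. v \<in> T \<Longrightarrow> dist v z < e \<Longrightarrow> fixset Q act v \<subseteq> fixset Q act z"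
    using fixset_subset_near[OF act _ _ fin, of z] T by (auto simp: closed_abelian_subgroup_def)
  have "z \<in> K" using z(1) by (simp add: K_def)
  then obtain r where "r > 0" and r: "K \<inter> ball z r \<subseteq> connected_component_set (K \<inter> ball z (e/2)) z"
    using K.connected_component_ball[of z "e/2"] \<open>e > 0\<close> by auto
  have "connected_component_set (K \<inter> ball z (e/2)) z \<subseteq> closure C"
    using \<open>z \<in> K\<close> \<open>e > 0\<close> connected_component_subset[of "K \<inter> ball z (e/2)" z]
    by (intro connected_near_stabilizer_subset_closure[OF G act T near z C])
      (auto simp: K_def dist_commute)
  show ?thesis
  proof (intro exI[of _ r] conjI ballI impI \<open>r > 0\<close>)
    fix w assume "w \<in> T" "fixset Q act z \<subseteq> fixset Q act w" "dist w z < r"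
    then have "w \<in> K \<inter> ball z r"
      by (simp add: K_def dist_commute)
    with r \<open>connected_component_set (K \<inter> ball z (e/2)) z \<subseteq> closure C\<close> show "w \<in> closure C"
      by blast
  qed
qed

theorem mainTheorem2:
  fixes G T :: "(real^'n^'n) set" and Q :: "'e::euclidean_space set"
    and act :: "real^'n^'n \<Rightarrow> 'e \<Rightarrow> 'e" and s t :: "real^'n^'n"
  assumes "compact_matrix_group G"
    and "smooth_submanifold Q"
    and "smooth_action G Q act"
    and "closed_abelian_subgroup T G"
    and "finite (isotropy T act ` Q)"
    and "s \<in> T" and "t \<in> T"
    and "fixclass T Q act s \<inter> closure (fixclass T Q act t) \<noteq> {}"
  shows "\<forall>x\<in>fixclass T Q act s. \<forall>y\<in>fixclass T Q act t.
           connected_component_set (fixclass T Q act s) x \<inter>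
             closure (connected_component_set (fixclass T Q act t) y) \<noteq> {} \<longrightarrow>
           connected_component_set (fixclass T Q act s) x \<subseteq>
             closure (connected_component_set (fixclass T Q act t) y)"
proof (intro ballI impI)
  fix x y
  let ?Cs = "connected_component_set (fixclass T Q act s) x"
  let ?Ct = "connected_component_set (fixclass T Q act t) y"
  assume "?Cs \<inter> closure ?Ct \<noteq> {}"
  moreover have "\<exists>r>0. \<forall>w\<in>?Cs. dist w z < r \<longrightarrow> w \<in> closure ?Ct"
    if z: "z \<in> ?Cs \<inter> closure ?Ct" for z
  proof -
    have Cs: "?Cs \<subseteq> fixclass T Q act s" by (rule connected_component_subset)
    then obtain r where "r > 0"
      and "\<forall>w\<in>T. fixset Q act z \<subseteq> fixset Q act w \<longrightarrow> dist w z < r \<longrightarrow> w \<in> closure ?Ct"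
      using near_stabilizer_mem_closure_component[OF assms(1,3,4,5), of z ?Ct t y] z
      by (auto simp: fixclass_def)
    moreover have "w \<in> T \<and> fixset Q act z \<subseteq> fixset Q act w" if "w \<in> ?Cs" for w
      using that z Cs by (auto simp: fixclass_def)
    ultimately show ?thesis by blast
  qed
  ultimately show "?Cs \<subseteq> closure ?Ct"
    by (intro connected_subset_closure connected_connected_component)
qed

end
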